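(* Let $q=p^m$ with $p>3$ prime and $m\ge1$, let $f(x)=x^{q+2}$ on $\mathbb{F}_{q^2}$, and for $b\in\mathbb{F}_{q^2}$ let $\delta(b)=\#\{u\in\mathbb{F}_{q^2}:\ 2u^{q+1}+u^2=b\}$. Then $\delta(3)=4$ if $q\equiv 5\pmod 6$, and $\delta(3)=2$ otherwise. In particular, if $q\equiv 5\pmod 6$ then the differential uniformity of $f$ is $\delta_f=4$.
   Context: $\delta_f(a,b)=\#\{x\in\mathbb{F}_{q^2}: f(x+a)-f(x)=b\}$, and $\delta_f=\max_{a\in\mathbb{F}_{q^2}^*,b\in\mathbb{F}_{q^2}}\delta_f(a,b)$; note $\delta(b)=\delta_f(1,b+\tfrac14)$. *)

theory Defs
  imports "HOL-Computational_Algebra.Primes"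
begin

definition diff_count :: "('a::{field,finite} \<Rightarrow> 'a) \<Rightarrow> 'a \<Rightarrow> 'a \<Rightarrow> nat" where
  "diff_count f a b = card {x. f (x + a) - f x = b}"

definition diff_unif :: "('a::{field,finite} \<Rightarrow> 'a) \<Rightarrow> nat" where
  "diff_unif f = Max {diff_count f a b | a b. a \<noteq> 0}"

end

theory Submission
  imports Defs "HOL-Computational_Algebra.Polynomial" "HOL-Number_Theory.Residues"
begin

text \<open>
  The substitution \<open>x = a (u - 1/2)\<close> turns \<open>(x + a)^(q+2) - x^(q+2) = b\<close> into
  \<open>2 u^(q+1) + u^2 = b / a^(q+2) - 1/4\<close>, so every \<open>\<delta>\<^sub>f(a, b)\<close> is a value of
  \<open>\<delta>(c) = #{u. 2 u^(q+1) + u^2 = c}\<close>.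
  Applying the Frobenius \<open>u \<mapsto> u^q\<close> to \<open>2 u^(q+1) + u^2 = c\<close>, and using that the norm
  \<open>N = u^(q+1)\<close> is Frobenius-fixed, gives \<open>u^2 = c - 2N\<close> and \<open>(u^q)^2 = c^q - 2N\<close>;
  multiplying, \<open>N\<close> is a root of a quadratic, and each \<open>N\<close> allows two \<open>u\<close>, so \<open>\<delta>(c) \<le> 4\<close>.
  For \<open>c = 3\<close> the two equations force \<open>u^q = \<plusminus>u\<close>, hence \<open>u = \<plusminus>1\<close> or
  \<open>u^2 = -3 \<and> u^q = -u\<close>. Square roots of \<open>-3\<close> are \<open>\<plusminus>(2w + 1)\<close> for a primitive cube root
  of unity \<open>w\<close>, which exists since \<open>3\<close> divides \<open>q^2 - 1\<close>, and \<open>(2w + 1)^q = 2w^q + 1\<close> is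
  \<open>-(2w + 1)\<close> exactly when \<open>q \<equiv> 2 (mod 3)\<close>.
\<close>

lemma card_quadratic_roots_le:
  fixes a b c :: "'a::idom"
  assumes "a \<noteq> 0"
  shows "card {x. a * x\<^sup>2 + b * x + c = 0} \<le> 2"
proof -
  have "{x. a * x\<^sup>2 + b * x + c = 0} = {x. poly [:c, b, a:] x = 0}"
    by (auto simp: algebra_simps power2_eq_square)
  also have "card \<dots> \<le> degree [:c, b, a:]"
    by (rule card_poly_roots_bound) (use assms in simp)
  finally show ?thesis
    using assms by simp
qed

lemma card_roots_unity_le:
  assumes "0 < k"
  shows "card {x::'a::idom. x ^ k = 1} \<le> k"
proof -
  have "{x::'a. x ^ k = 1} = {x. poly (Polynomial.monom 1 k - 1) x = 0}"
    by (simp add: poly_monom)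
  also have "card \<dots> \<le> degree (Polynomial.monom 1 k - 1 :: 'a poly)"
  proof (rule card_poly_roots_bound)
    have "poly (Polynomial.monom 1 k - 1) (0::'a) \<noteq> 0"
      using assms by (simp add: poly_monom power_0_left)
    then show "Polynomial.monom 1 k - 1 \<noteq> (0 :: 'a poly)"
      by auto
  qed
  also have "\<dots> \<le> k"
    by (rule degree_diff_le) (simp_all add: degree_monom_le)
  finally show ?thesis .
qed

lemma power_eq_power_mod_3:
  fixes w :: "'a::comm_ring_1"
  assumes "w\<^sup>2 + w + 1 = 0"
  shows "w ^ n = w ^ (n mod 3)"
proof -
  have "w ^ 3 - 1 = (w - 1) * (w\<^sup>2 + w + 1)"
    by (simp add: algebra_simps power2_eq_square power3_eq_cube)
  then have "w ^ 3 = 1"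
    using assms by simp
  have "w ^ n = w ^ (3 * (n div 3) + n mod 3)"
    by simp
  also have "\<dots> = (w ^ 3) ^ (n div 3) * w ^ (n mod 3)"
    by (simp only: power_add power_mult)
  finally have "w ^ n = (w ^ 3) ^ (n div 3) * w ^ (n mod 3)" .
  with \<open>w ^ 3 = 1\<close> show ?thesis
    by simp
qed

lemma field_power_card_UNIV_minus_1:
  fixes x :: "'a::{field,finite}"
  assumes "x \<noteq> 0"
  shows "x ^ (card (UNIV :: 'a set) - 1) = 1"
proof -
  define U where "U = UNIV - {0::'a}"
  have "(\<Prod>y\<in>U. x * y) = (\<Prod>y\<in>U. y)"
    by (rule prod.reindex_bij_witness[of _ "\<lambda>y. y / x" "\<lambda>y. x * y"]) (use assms in \<open>auto simp: U_def\<close>)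
  moreover have "(\<Prod>y\<in>U. x * y) = x ^ card U * (\<Prod>y\<in>U. y)"
    by (simp add: prod.distrib)
  moreover have "(\<Prod>y\<in>U. y) \<noteq> 0"
    by (simp add: U_def)
  ultimately have "x ^ card U = 1"
    by simp
  then show ?thesis
    by (simp add: U_def card_Diff_singleton)
qed

lemma field_power_card_UNIV:
  fixes x :: "'a::{field,finite}"
  shows "x ^ card (UNIV :: 'a set) = x"
proof (cases "x = 0")
  case False
  have "card (UNIV :: 'a set) = Suc (card (UNIV :: 'a set) - 1)"
    using finite_UNIV_card_ge_0[where 'a = 'a] by simp
  then have "x ^ card (UNIV :: 'a set) = x ^ (card (UNIV :: 'a set) - 1) * x"
    by (metis power_Suc2)
  then show ?thesis
    using field_power_card_UNIV_minus_1[OF False] by simp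
qed (use finite_UNIV_card_ge_0[where 'a = 'a] in simp)

lemma field_exists_nontrivial_root_of_unity:
  assumes "1 < d" and "d dvd card (UNIV :: 'a::{field,finite} set) - 1"
  shows "\<exists>w::'a. w \<noteq> 1 \<and> w ^ d = 1"
proof (rule ccontr)
  assume "\<not> ?thesis"
  then have trivial: "w = 1" if "w ^ d = 1" for w :: 'a
    using that by blast
  define U where "U = UNIV - {0::'a}"
  have card_U: "card U = card (UNIV :: 'a set) - 1"
    by (simp add: U_def card_Diff_singleton)
  obtain k where k: "card U = d * k"
    using assms(2) card_U by (auto elim: dvdE)
  have "inj_on (\<lambda>x. x ^ d) U"
  proof (rule inj_onI)
    fix x y assume "x \<in> U" "y \<in> U" "x ^ d = y ^ d"
    then have "(x / y) ^ d = 1"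
      by (simp add: U_def power_divide)
    then have "x / y = 1"
      by (rule trivial)
    with \<open>y \<in> U\<close> show "x = y"
      by (simp add: U_def)
  qed
  then have d_powers: "(\<lambda>x. x ^ d) ` U = U"
    by (intro endo_inj_surj) (auto simp: U_def)
  have k_th_roots: "U \<subseteq> {y. y ^ k = 1}"
  proof
    fix y assume "y \<in> U"
    then obtain x where "x \<in> U" "y = x ^ d"
      using d_powers by blast
    then have "y ^ k = x ^ (card U)"
      by (simp add: k power_mult)
    also have "\<dots> = 1"
      using \<open>x \<in> U\<close> card_U field_power_card_UNIV_minus_1 by (simp add: U_def)
    finally show "y \<in> {y. y ^ k = 1}"
      by simp
  qed
  have "(1::'a) \<in> U"
    by (simp add: U_def)
  then have "0 < card U"
    by (auto simp: card_gt_0_iff)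
  then have "0 < k"
    using k by simp
  have "card U \<le> card {y::'a. y ^ k = 1}"
    using k_th_roots by (rule card_mono[rotated]) simp
  also have "\<dots> \<le> k"
    using \<open>0 < k\<close> by (rule card_roots_unity_le)
  also have "k < d * k"
    using \<open>0 < k\<close> assms(1) by simp
  finally show False
    using k by simp
qed

lemma field_exists_sqrt_minus_3:
  assumes "card (UNIV :: 'a::{field,finite} set) mod 3 = 1"
  shows "\<exists>u::'a. u\<^sup>2 = -3"
proof -
  have "3 dvd card (UNIV :: 'a set) - 1"
    using assms by presburger
  then obtain w :: 'a where "w \<noteq> 1" "w ^ 3 = 1"
    using field_exists_nontrivial_root_of_unity[of 3] by auto
  have "(w - 1) * (w\<^sup>2 + w + 1) = w ^ 3 - 1"
    by (simp add: algebra_simps power2_eq_square power3_eq_cube)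
  with \<open>w ^ 3 = 1\<close> \<open>w \<noteq> 1\<close> have "w\<^sup>2 + w + 1 = 0"
    by simp
  have "(2 * w + 1)\<^sup>2 = 4 * (w\<^sup>2 + w + 1) - 3"
    by (simp add: algebra_simps power2_eq_square)
  with \<open>w\<^sup>2 + w + 1 = 0\<close> have "(2 * w + 1)\<^sup>2 = -3"
    by simp
  then show ?thesis ..
qed

lemma CHAR_eq_of_card_UNIV_prime_power:
  assumes "prime p" and "card (UNIV :: 'a::{field,finite} set) = p ^ n"
  shows "CHAR('a) = p"
proof -
  have "prime CHAR('a)"
    by (intro prime_CHAR_semidom finite_imp_CHAR_pos) simp
  moreover have "CHAR('a) dvd p ^ n"
    using CHAR_dvd_CARD[where 'a = 'a] assms(2) by simp
  ultimately have "CHAR('a) dvd p"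
    by (rule prime_dvd_power)
  with \<open>prime CHAR('a)\<close> assms(1) show ?thesis
    by (rule primes_dvd_imp_eq)
qed

lemma diff_unif_eqI:
  fixes f :: "'a::{field,finite} \<Rightarrow> 'a"
  assumes "\<And>a b. a \<noteq> 0 \<Longrightarrow> diff_count f a b \<le> n"
    and "a \<noteq> 0" and "diff_count f a b = n"
  shows "diff_unif f = n"
  unfolding diff_unif_def
proof (rule Max_eqI)
  show "finite {diff_count f a b |a b. a \<noteq> 0}"
    by (rule finite_subset[of _ "(\<lambda>(a, b). diff_count f a b) ` UNIV"]) auto
qed (use assms in auto)

lemma prime_power_mod_6:
  fixes p m :: nat
  assumes "prime p" and "3 < p"
  shows "p ^ m mod 6 = 1 \<or> p ^ m mod 6 = 5"
proof -
  have "odd (p ^ m)"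
    using assms prime_odd_nat by simp
  moreover have "\<not> 3 dvd p ^ m"
  proof
    assume "3 dvd p ^ m"
    then have "3 dvd p"
      by (rule prime_dvd_power[rotated]) simp
    then have "3 = p"
      using primes_dvd_imp_eq[of 3 p] assms(1) by simp
    with assms(2) show False
      by simp
  qed
  ultimately show ?thesis
    by presburger
qed

lemma of_nat_neq_0_below_CHAR:
  assumes "0 < n" and "n < CHAR('a::semiring_1)"
  shows "(of_nat n :: 'a) \<noteq> 0"
  using assms by (auto simp: of_nat_eq_0_iff_char_dvd dest: dvd_imp_le)

context
  fixes q :: nat
  assumes card_UNIV_eq: "card (UNIV :: 'a::{field,finite} set) = q\<^sup>2"
    and power_q_add: "\<And>x y :: 'a. (x + y) ^ q = x ^ q + y ^ q"
    and two_neq_0: "(2::'a) \<noteq> 0"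
    and three_neq_0: "(3::'a) \<noteq> 0"
begin

lemma four_neq_0: "(4::'a) \<noteq> 0"
  using two_neq_0 mult_eq_0_iff[of "2::'a" 2] by simp

lemma self_eq_neg_iff: "(x::'a) = - x \<longleftrightarrow> x = 0"
proof -
  have "x = - x \<longleftrightarrow> x + x = 0"
    by (rule eq_neg_iff_add_eq_0)
  also have "x + x = 2 * x"
    by (rule mult_2[symmetric])
  also have "2 * x = 0 \<longleftrightarrow> x = 0"
    using two_neq_0 by simp
  finally show ?thesis .
qed

lemma q_pos: "0 < q"
  using finite_UNIV_card_ge_0[where 'a = 'a] card_UNIV_eq by simp

lemma power_q_power_q: "(x ^ q) ^ q = (x::'a)"
proof -
  have "(x ^ q) ^ q = x ^ card (UNIV :: 'a set)"
    by (simp add: card_UNIV_eq power2_eq_square power_mult)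
  then show ?thesis
    by (simp add: field_power_card_UNIV)
qed

lemma power_q_minus: "(- x) ^ q = - (x ^ q :: 'a)"
proof -
  have "x ^ q + (- x) ^ q = 0"
    using power_q_add[of x "- x"] q_pos by (simp add: zero_power)
  then show ?thesis
    by (simp add: eq_neg_iff_add_eq_0 add.commute)
qed

lemma power_q_diff: "(x - y) ^ q = x ^ q - (y ^ q :: 'a)"
  using power_q_add[of x "- y"] power_q_minus[of y] by simp

lemma power_q_of_nat: "(of_nat n :: 'a) ^ q = of_nat n"
  by (induction n) (simp_all add: power_q_add q_pos)

lemma power_q_numeral: "(numeral k :: 'a) ^ q = numeral k"
  using power_q_of_nat[of "numeral k"] by simp

lemma power_q_norm: "(u ^ (q + 1)) ^ q = (u::'a) ^ (q + 1)"
proof -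
  have "(u ^ (q + 1)) ^ q = (u ^ q) ^ q * u ^ q"
    by (simp add: power_add power_mult_distrib)
  also have "\<dots> = u ^ (q + 1)"
    by (simp add: power_q_power_q power_add mult.commute)
  finally show ?thesis .
qed

lemma delta_equation_frobenius:
  assumes "2 * u ^ (q + 1) + u\<^sup>2 = (c::'a)"
  shows "2 * u ^ (q + 1) + (u ^ q)\<^sup>2 = c ^ q"
proof -
  have square: "(u\<^sup>2) ^ q = (u ^ q)\<^sup>2"
    by (simp add: mult.commute flip: power_mult)
  have "(2 * u ^ (q + 1) + u\<^sup>2) ^ q = c ^ q"
    using assms by simp
  then show ?thesis
    by (simp only: power_q_add power_mult_distrib power_q_numeral power_q_norm square)
qed

lemma diff_power_q_plus_2_halves:
  "(u + 1/2) ^ (q + 2) - (u - 1/2) ^ (q + 2) = 2 * u ^ (q + 1) + u\<^sup>2 + (1/4 :: 'a)"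
proof -
  have half: "(1/2 :: 'a) ^ q = 1/2"
    by (simp add: power_one_over power_q_numeral)
  have expand: "(v + h) * (u + h)\<^sup>2 - (v - h) * (u - h)\<^sup>2 = 2 * h * (2 * v * u + u\<^sup>2 + h\<^sup>2)"
    for v h :: 'a
    by (simp add: algebra_simps power2_eq_square)
  have "(u + 1/2) ^ (q + 2) - (u - 1/2) ^ (q + 2)
      = (u ^ q + 1/2) * (u + 1/2)\<^sup>2 - (u ^ q - 1/2) * (u - 1/2)\<^sup>2"
    by (simp only: power_add power_q_add power_q_diff half)
  also have "\<dots> = 2 * (1/2) * (2 * u ^ q * u + u\<^sup>2 + (1/2)\<^sup>2)"
    by (rule expand)
  also have "\<dots> = 2 * u ^ (q + 1) + u\<^sup>2 + 1/4"
    using two_neq_0 by (simp add: power_add power_one_over mult.commute)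
  finally show ?thesis .
qed

lemma power_q_plus_2_homogeneous:
  "(a * (u + 1/2)) ^ (q + 2) - (a * (u - 1/2)) ^ (q + 2)
    = a ^ (q + 2) * (2 * u ^ (q + 1) + u\<^sup>2 + (1/4 :: 'a))"
  by (simp only: power_mult_distrib flip: right_diff_distrib diff_power_q_plus_2_halves)

lemma diff_count_power_q_plus_2_eq_card_delta:
  assumes "a \<noteq> 0"
  shows "diff_count (\<lambda>x::'a. x ^ (q + 2)) a b
    = card {u. 2 * u ^ (q + 1) + u\<^sup>2 = b / a ^ (q + 2) - 1/4}"
proof -
  define s where "s = (\<lambda>x::'a. x / a + 1/2)"
  have "a ^ (q + 2) \<noteq> 0"
    using assms by simp
  have "(x + a) ^ (q + 2) - x ^ (q + 2) = b \<longleftrightarrow> 2 * s x ^ (q + 1) + (s x)\<^sup>2 = b / a ^ (q + 2) - 1/4"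
    for x
  proof -
    have shifts: "a * (s x + 1/2) = x + a" "a * (s x - 1/2) = x"
      using assms two_neq_0 by (simp_all add: s_def distrib_left right_diff_distrib)
    have "(x + a) ^ (q + 2) - x ^ (q + 2) = a ^ (q + 2) * (2 * s x ^ (q + 1) + (s x)\<^sup>2 + 1/4)"
      using power_q_plus_2_homogeneous[of a "s x"] unfolding shifts .
    then show ?thesis
      using \<open>a ^ (q + 2) \<noteq> 0\<close> by (simp add: eq_diff_eq nonzero_eq_divide_eq mult.commute)
  qed
  then have preimage: "{x. (x + a) ^ (q + 2) - x ^ (q + 2) = b}
      = s -` {u. 2 * u ^ (q + 1) + u\<^sup>2 = b / a ^ (q + 2) - 1/4}"
    by blast
  have "inj s"
    by (rule inj_onI) (use assms in \<open>simp add: s_def\<close>)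
  moreover have "surj s"
    by (rule surjI[of s "\<lambda>u. a * (u - 1/2)"]) (use assms in \<open>simp add: s_def\<close>)
  ultimately show ?thesis
    unfolding diff_count_def preimage by (intro card_vimage_inj) simp_all
qed

lemma card_delta_le_4: "card {u::'a. 2 * u ^ (q + 1) + u\<^sup>2 = c} \<le> 4"
proof -
  let ?norms = "{N::'a. 3 * N\<^sup>2 + (- 2 * (c + c ^ q)) * N + c * c ^ q = 0}"
  let ?roots = "\<lambda>N. {u::'a. 1 * u\<^sup>2 + 0 * u + (2 * N - c) = 0}"
  have "{u. 2 * u ^ (q + 1) + u\<^sup>2 = c} \<subseteq> (\<Union>N\<in>?norms. ?roots N)"
  proof
    fix u assume "u \<in> {u. 2 * u ^ (q + 1) + u\<^sup>2 = c}"
    then have sol: "2 * u ^ (q + 1) + u\<^sup>2 = c"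
      by simp
    define N where "N = u ^ (q + 1)"
    have u2: "u\<^sup>2 = c - 2 * N" and uq2: "(u ^ q)\<^sup>2 = c ^ q - 2 * N"
      using sol delta_equation_frobenius[OF sol] by (simp_all add: N_def algebra_simps)
    have "N\<^sup>2 = u\<^sup>2 * (u ^ q)\<^sup>2"
      by (simp add: N_def power_add power_mult_distrib mult.commute)
    then have "N\<^sup>2 = (c - 2 * N) * (c ^ q - 2 * N)"
      by (simp only: u2 uq2)
    then have "N \<in> ?norms"
      by (simp add: algebra_simps power2_eq_square)
    moreover have "u \<in> ?roots N"
      using u2 by simp
    ultimately show "u \<in> (\<Union>N\<in>?norms. ?roots N)"
      by blast
  qed
  then have "card {u. 2 * u ^ (q + 1) + u\<^sup>2 = c} \<le> card (\<Union>N\<in>?norms. ?roots N)"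
    by (rule card_mono[rotated]) simp
  also have "\<dots> \<le> (\<Sum>N\<in>?norms. card (?roots N))"
    by (rule card_UN_le) simp
  also have "\<dots> \<le> (\<Sum>N\<in>?norms. 2)"
    by (intro sum_mono card_quadratic_roots_le) simp
  also have "\<dots> \<le> 2 * 2"
    using card_quadratic_roots_le[of "3::'a"] three_neq_0 by simp
  finally show ?thesis
    by simp
qed

lemma delta_3_set_eq:
  "{u::'a. 2 * u ^ (q + 1) + u\<^sup>2 = 3} = {1, -1} \<union> {u. u\<^sup>2 = -3 \<and> u ^ q = - u}"
proof (intro equalityI subsetI)
  fix u :: 'a
  assume "u \<in> {u. 2 * u ^ (q + 1) + u\<^sup>2 = 3}"
  then have sol: "2 * u ^ (q + 1) + u\<^sup>2 = 3"
    by simp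
  have conj: "2 * u ^ (q + 1) + (u ^ q)\<^sup>2 = 3"
    using delta_equation_frobenius[OF sol] by (simp add: power_q_numeral)
  have "2 * u ^ (q + 1) + u\<^sup>2 = 2 * u ^ (q + 1) + (u ^ q)\<^sup>2"
    by (simp only: sol conj)
  then have "u\<^sup>2 = (u ^ q)\<^sup>2"
    by (rule add_left_imp_eq)
  then consider "u ^ q = u" | "u ^ q = - u"
    using power2_eq_iff[of "u ^ q" u] by auto
  then show "u \<in> {1, -1} \<union> {u. u\<^sup>2 = -3 \<and> u ^ q = - u}"
  proof cases
    case 1
    with sol have "3 * u\<^sup>2 = 3 * 1"
      by (simp add: power_add power2_eq_square)
    then have "u\<^sup>2 = 1"
      using three_neq_0 by simp
    then show ?thesis
      by (auto simp: power2_eq_1_iff)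
  next
    case 2
    with sol have "- u\<^sup>2 = 3"
      by (simp add: power_add power2_eq_square)
    then show ?thesis
      using 2 by (auto simp: minus_equation_iff)
  qed
next
  fix u :: 'a
  assume "u \<in> {1, -1} \<union> {u. u\<^sup>2 = -3 \<and> u ^ q = - u}"
  then consider "u = 1" | "u = -1" | "u\<^sup>2 = -3" "u ^ q = - u"
    by auto
  then show "u \<in> {u. 2 * u ^ (q + 1) + u\<^sup>2 = 3}"
  proof cases
    case 2
    then show ?thesis
      using power_q_minus[of 1] by (simp add: power_add)
  next
    case 3
    then have "2 * u ^ (q + 1) + u\<^sup>2 = - u\<^sup>2"
      by (simp add: power_add power2_eq_square)
    then show ?thesis
      using 3 by simp
  qed simp
qed

lemma power_q_sqrt_minus_3:
  assumes "u\<^sup>2 = (-3::'a)"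
  shows "q mod 3 = 1 \<Longrightarrow> u ^ q = u" and "q mod 3 = 2 \<Longrightarrow> u ^ q = - u"
proof -
  define w where "w = (u - 1) / 2"
  have "2 * w = u - 1"
    using two_neq_0 by (simp add: w_def)
  then have u: "u = 2 * w + 1"
    by simp
  have "4 * (w\<^sup>2 + w + 1) = u\<^sup>2 + 3"
    by (simp add: u algebra_simps power2_eq_square)
  also have "\<dots> = 0"
    using assms by simp
  finally have "w\<^sup>2 + w + 1 = 0"
    using four_neq_0 by (simp only: mult_eq_0_iff) blast
  then have w_q: "w ^ q = w ^ (q mod 3)"
    by (rule power_eq_power_mod_3)
  have u_q: "u ^ q = 2 * w ^ q + 1"
    by (simp add: u power_q_add power_mult_distrib power_q_numeral)
  show "u ^ q = u" if "q mod 3 = 1"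
    using that by (simp only: u_q w_q) (simp add: u)
  show "u ^ q = - u" if "q mod 3 = 2"
  proof -
    have "u ^ q = 2 * w\<^sup>2 + 1"
      using that by (simp only: u_q w_q)
    also have "\<dots> = - u + 2 * (w\<^sup>2 + w + 1)"
      by (simp add: u algebra_simps)
    also have "\<dots> = - u"
      using \<open>w\<^sup>2 + w + 1 = 0\<close> by simp
    finally show ?thesis .
  qed
qed

lemma card_delta_3:
  assumes "q mod 3 \<noteq> 0"
  shows "card {u::'a. 2 * u ^ (q + 1) + u\<^sup>2 = 3} = (if q mod 3 = 2 then 4 else 2)"
proof -
  let ?T = "{u::'a. u\<^sup>2 = -3 \<and> u ^ q = - u}"
  have "(1::'a) \<noteq> -1"
    using self_eq_neg_iff[of 1] by simp
  then have card_units: "card {1, -1 :: 'a} = 2"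
    by simp
  have "(1::'a) \<noteq> -3"
    using four_neq_0 by (simp add: eq_neg_iff_add_eq_0)
  then have disjoint: "{1, -1} \<inter> ?T = {}"
    by auto
  have "card ?T = (if q mod 3 = 2 then 2 else 0)"
  proof (cases "q mod 3 = 2")
    case True
    have "q\<^sup>2 mod 3 = 1"
      using True power_mod[of q 3 2] by simp
    then obtain u0 :: 'a where u0: "u0\<^sup>2 = -3"
      using field_exists_sqrt_minus_3[where 'a = 'a] card_UNIV_eq by auto
    then have "u\<^sup>2 = -3 \<longleftrightarrow> u = u0 \<or> u = - u0" for u
      using power2_eq_iff[of u u0] by simp
    then have "?T = {u0, - u0}"
      using power_q_sqrt_minus_3(2)[OF _ True] by auto
    moreover have "u0 \<noteq> - u0"
      using u0 three_neq_0 self_eq_neg_iff[of u0] by auto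
    ultimately show ?thesis
      using True by simp
  next
    case False
    with assms have "q mod 3 = 1"
      by simp
    have "u \<notin> ?T" for u
    proof
      assume "u \<in> ?T"
      then have "u = - u" and "u\<^sup>2 = -3"
        using power_q_sqrt_minus_3(1)[OF _ \<open>q mod 3 = 1\<close>] by auto
      then show False
        using three_neq_0 self_eq_neg_iff[of u] by simp
    qed
    then show ?thesis
      using False by simp
  qed
  moreover have "card {u::'a. 2 * u ^ (q + 1) + u\<^sup>2 = 3} = card {1, -1 :: 'a} + card ?T"
    unfolding delta_3_set_eq by (rule card_Un_disjoint) (simp_all add: disjoint)
  ultimately show ?thesis
    using card_units by simp
qed

lemma diff_unif_power_q_plus_2:
  assumes "q mod 3 = 2"
  shows "diff_unif (\<lambda>x::'a. x ^ (q + 2)) = 4"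
proof (rule diff_unif_eqI)
  show "diff_count (\<lambda>x::'a. x ^ (q + 2)) a b \<le> 4" if "a \<noteq> 0" for a b
    unfolding diff_count_power_q_plus_2_eq_card_delta[OF that] by (rule card_delta_le_4)
  have "diff_count (\<lambda>x::'a. x ^ (q + 2)) 1 (3 + 1/4) = card {u::'a. 2 * u ^ (q + 1) + u\<^sup>2 = 3}"
    using diff_count_power_q_plus_2_eq_card_delta[of 1 "3 + 1/4"] by simp
  also have "\<dots> = 4"
    using card_delta_3 assms by simp
  finally show "diff_count (\<lambda>x::'a. x ^ (q + 2)) 1 (3 + 1/4) = 4" .
qed simp

end

theorem proposition5:
  fixes p m q :: nat
  assumes "prime p" and "p > 3" and "m \<ge> 1" and "q = p ^ m"
    and "card (UNIV :: ('a::{field,finite}) set) = q ^ 2"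
  shows "card {u :: 'a. 2 * u ^ (q + 1) + u ^ 2 = 3} = (if q mod 6 = 5 then 4 else 2)
         \<and> (q mod 6 = 5 \<longrightarrow> diff_unif (\<lambda>x :: 'a. x ^ (q + 2)) = 4)"
proof -
  have "CHAR('a) = p"
    using assms(1,4,5) by (intro CHAR_eq_of_card_UNIV_prime_power[of p "m * 2"]) (simp_all add: power_mult)
  then have frobenius: "(x + y) ^ q = x ^ q + y ^ q" for x y :: 'a
    using assms(1,4) by (intro freshmans_dream') simp_all
  have "(of_nat 2 :: 'a) \<noteq> 0" and "(of_nat 3 :: 'a) \<noteq> 0"
    using \<open>CHAR('a) = p\<close> assms(2) by (simp_all only: of_nat_neq_0_below_CHAR not_False_eq_True)
  then have two: "(2::'a) \<noteq> 0" and three: "(3::'a) \<noteq> 0"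
    by simp_all
  have "q mod 6 = 1 \<or> q mod 6 = 5"
    using prime_power_mod_6 assms(1,2,4) by simp
  then have "q mod 3 \<noteq> 0" and mod_6: "q mod 6 = 5 \<longleftrightarrow> q mod 3 = 2"
    by presburger+
  note setting = assms(5) frobenius two three
  show ?thesis
    using card_delta_3[OF setting \<open>q mod 3 \<noteq> 0\<close>] diff_unif_power_q_plus_2[OF setting]
    unfolding mod_6 by simp
qed

end
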